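(* Let $\forall\overline p\,\Gamma/^2\phi$ be a $\Pi_2$-rule with $\overline p=p_1,\dots,p_n$ and let $C=\{p_1,\dots,p_n\}$. Then $\forall\overline p\,\Gamma/^2\phi$ is admissible over $\vdash_S$ if and only if for every $C$-invariant substitution $\sigma$, $\vdash_S\sigma(\Gamma)$ implies $\vdash_S\sigma(\phi)$.
   Context: $\vdash$ is a finitary structural logic over a signature $\mathcal L$, and $\vdash_S$ a Hilbert-style system for it. A $\Pi_2$-rule $\forall\overline p\,\Gamma/^2\phi$ consists of a finite set of formulas $\Gamma=\{\phi_i(\overline p,\overline q)\}$ and a formula $\phi(\overline q)$ not containing the variables $\overline p$. For a set $\Sigma$ of $\Pi_2$-rules, $\vdash_{S\oplus\Sigma}\psi$ means there is a sequence $\psi_0,\dots,\psi_m=\psi$ where each $\psi_i$ is an axiom instance of $\vdash_S$, or follows from earlier members by a rule of $\vdash_S$, or $\psi_i=\chi(\overline\xi/\overline q)$ where $\forall\overline p\{\mu_0,\dots,\mu_k\}/^2\chi(\overline q)\in\Sigma$ and each $\mu_j(\overline r/\overline p,\overline\xi/\overline q)$ occurs earlier, with $\overline r$ fresh variables not occurring in $\overline\xi$. A $\Pi_2$-rule $\rho$ is admissible over $\vdash_S$ if for all $\psi$, $\vdash_{S\oplus\{\rho\}}\psi$ implies $\vdash_S\psi$. For a finite set $C$ of variables, a substitution $\sigma$ is $C$-invariant if $\sigma(p)=p$ for $p\in C$ and, for every variable $q\notin C$, $\sigma(q)$ contains no variable from $C$. *)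

theory Defs
  imports Main
begin

datatype ('f, 'v) form = Var 'v | Op 'f "('f, 'v) form list"

fun vars :: "('f, 'v) form \<Rightarrow> 'v set" where
  "vars (Var v) = {v}"
| "vars (Op f ts) = (\<Union>t\<in>set ts. vars t)"

fun subst :: "('v \<Rightarrow> ('f, 'v) form) \<Rightarrow> ('f, 'v) form \<Rightarrow> ('f, 'v) form" where
  "subst \<sigma> (Var v) = \<sigma> v"
| "subst \<sigma> (Op f ts) = Op f (map (subst \<sigma>) ts)"

text \<open>A Hilbert-style system S: a set of axiom schemata Ax and a set of finitary rules
  (premises, conclusion); instances are obtained by arbitrary substitutions.\<close>

type_synonym ('f, 'v) hilbert = "('f, 'v) form set \<times> ((('f, 'v) form list \<times> ('f, 'v) form) set)"

definition hilbert_step :: "('f, 'v) hilbert \<Rightarrow> ('f, 'v) form list \<Rightarrow> ('f, 'v) form \<Rightarrow> bool" where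
  "hilbert_step S prev \<psi> \<longleftrightarrow>
     (\<exists>a\<in>fst S. \<exists>\<sigma>. \<psi> = subst \<sigma> a)
   \<or> (\<exists>(prems, c)\<in>snd S. \<exists>\<sigma>. \<psi> = subst \<sigma> c \<and> (\<forall>\<mu>\<in>set prems. subst \<sigma> \<mu> \<in> set prev))"

type_synonym ('f, 'v) pi2rule = "'v list \<times> ('f, 'v) form list \<times> ('f, 'v) form"

definition pi2_rule :: "('f, 'v) pi2rule \<Rightarrow> bool" where
  "pi2_rule \<rho> \<longleftrightarrow> (case \<rho> of (ps, \<Gamma>, \<phi>) \<Rightarrow> vars \<phi> \<inter> set ps = {})"

text \<open>One application of a Pi_2-rule: psi = chi(xi/q), and each mu_j(r/p, xi/q) occurs
  earlier, with r fresh (distinct) variables not occurring in xi.\<close>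

definition pi2_step :: "('f, 'v) pi2rule \<Rightarrow> ('f, 'v) form list \<Rightarrow> ('f, 'v) form \<Rightarrow> bool" where
  "pi2_step \<rho> prev \<psi> \<longleftrightarrow> (case \<rho> of (ps, \<Gamma>, \<phi>) \<Rightarrow>
     (\<exists>\<sigma> r. inj_on r (set ps)
        \<and> (\<forall>p\<in>set ps. \<forall>q\<in>((\<Union>\<mu>\<in>set \<Gamma>. vars \<mu>) \<union> vars \<phi>) - set ps. r p \<notin> vars (\<sigma> q))
        \<and> \<psi> = subst \<sigma> \<phi>
        \<and> (\<forall>\<mu>\<in>set \<Gamma>. subst (\<lambda>v. if v \<in> set ps then Var (r v) else \<sigma> v) \<mu> \<in> set prev)))"

definition derivable :: "('f, 'v) hilbert \<Rightarrow> ('f, 'v) form \<Rightarrow> bool" where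
  "derivable S \<psi> \<longleftrightarrow> (\<exists>xs. xs \<noteq> [] \<and> last xs = \<psi> \<and>
      (\<forall>i<length xs. hilbert_step S (take i xs) (xs ! i)))"

definition derivable_ext :: "('f, 'v) hilbert \<Rightarrow> ('f, 'v) pi2rule set \<Rightarrow> ('f, 'v) form \<Rightarrow> bool" where
  "derivable_ext S \<Sigma> \<psi> \<longleftrightarrow> (\<exists>xs. xs \<noteq> [] \<and> last xs = \<psi> \<and>
      (\<forall>i<length xs. hilbert_step S (take i xs) (xs ! i)
                   \<or> (\<exists>\<rho>\<in>\<Sigma>. pi2_step \<rho> (take i xs) (xs ! i))))"

definition admissible :: "('f, 'v) hilbert \<Rightarrow> ('f, 'v) pi2rule \<Rightarrow> bool" where
  "admissible S \<rho> \<longleftrightarrow> (\<forall>\<psi>. derivable_ext S {\<rho>} \<psi> \<longrightarrow> derivable S \<psi>)"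

definition C_invariant :: "'v set \<Rightarrow> ('v \<Rightarrow> ('f, 'v) form) \<Rightarrow> bool" where
  "C_invariant C \<sigma> \<longleftrightarrow> (\<forall>p\<in>C. \<sigma> p = Var p) \<and> (\<forall>q. q \<notin> C \<longrightarrow> vars (\<sigma> q) \<inter> C = {})"

end

theory Submission
  imports Defs
begin

text \<open>
  If the rule is admissible and \<sigma> is C-invariant with \<sigma>(\<Gamma>) derivable, then \<sigma>(\<phi>) is obtained
  by one application of the rule with the identity as choice of fresh variables r, since
  C-invariance makes the p's fresh for \<sigma>(q).
  Conversely, replace each application of the rule in an extended derivation by a derivation
  in S. Given derivable premises \<mu>(r/p, \<xi>/q), rename r back to p and move the p's occurring in
  \<xi> to fresh variables; this yields a C-invariant substitution \<sigma>' whose instances of \<Gamma> are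
  substitution instances of the premises, hence derivable. The criterion gives \<sigma>'(\<phi>), and
  undoing the second renaming (\<phi> contains no p) recovers the conclusion \<xi>(\<phi>).
\<close>

lemma subst_subst: "subst \<theta> (subst \<sigma> t) = subst (\<lambda>v. subst \<theta> (\<sigma> v)) t"
  by (induction t) auto

lemma subst_cong: "(\<And>v. v \<in> vars t \<Longrightarrow> \<sigma> v = \<tau> v) \<Longrightarrow> subst \<sigma> t = subst \<tau> t"
  by (induction t) auto

lemma subst_Var: "subst Var t = t"
  by (induction t) (auto simp: map_idI)

lemma vars_subst: "vars (subst \<sigma> t) = (\<Union>v\<in>vars t. vars (\<sigma> v))"
  by (induction t) auto

lemma finite_vars: "finite (vars t)"
  by (induction t) auto

definition is_derivation :: "('f, 'v) hilbert \<Rightarrow> ('f, 'v) form list \<Rightarrow> bool" where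
  "is_derivation S xs \<longleftrightarrow> (\<forall>i<length xs. hilbert_step S (take i xs) (xs ! i))"

lemma hilbert_step_mono:
  "set prev \<subseteq> set prev' \<Longrightarrow> hilbert_step S prev \<psi> \<Longrightarrow> hilbert_step S prev' \<psi>"
  unfolding hilbert_step_def by fastforce

lemma is_derivation_snoc:
  "is_derivation S (xs @ [\<psi>]) \<longleftrightarrow> is_derivation S xs \<and> hilbert_step S xs \<psi>"
  unfolding is_derivation_def by (auto simp: nth_append less_Suc_eq)

lemma is_derivation_append:
  assumes "is_derivation S xs" and "is_derivation S ys"
  shows "is_derivation S (xs @ ys)"
  unfolding is_derivation_def
proof (intro allI impI)
  fix i assume i: "i < length (xs @ ys)"
  show "hilbert_step S (take i (xs @ ys)) ((xs @ ys) ! i)"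
  proof (cases "i < length xs")
    case True
    then show ?thesis using assms(1) by (simp add: is_derivation_def nth_append)
  next
    case False
    then have "hilbert_step S (take (i - length xs) ys) ((xs @ ys) ! i)"
      using assms(2) i by (simp add: is_derivation_def nth_append)
    moreover have "set (take (i - length xs) ys) \<subseteq> set (take i (xs @ ys))"
      using False by auto
    ultimately show ?thesis by (rule hilbert_step_mono[rotated])
  qed
qed

lemma derivable_iff_in_derivation:
  "derivable S \<psi> \<longleftrightarrow> (\<exists>xs. is_derivation S xs \<and> \<psi> \<in> set xs)"
proof
  assume "derivable S \<psi>"
  then show "\<exists>xs. is_derivation S xs \<and> \<psi> \<in> set xs"
    unfolding derivable_def is_derivation_def by auto
next
  assume "\<exists>xs. is_derivation S xs \<and> \<psi> \<in> set xs"
  then obtain xs i where xs: "is_derivation S xs" and i: "i < length xs" "\<psi> = xs ! i"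
    by (auto simp: in_set_conv_nth)
  let ?ys = "take (Suc i) xs"
  have "?ys \<noteq> []" "last ?ys = \<psi>"
    using i by (auto simp: take_Suc_conv_app_nth)
  moreover have "\<forall>j<length ?ys. hilbert_step S (take j ?ys) (?ys ! j)"
    using xs i unfolding is_derivation_def by (simp add: min_def)
  ultimately show "derivable S \<psi>"
    unfolding derivable_def by blast
qed

lemma derivation_containing:
  assumes "\<forall>x\<in>set L. derivable S x"
  shows "\<exists>xs. is_derivation S xs \<and> set L \<subseteq> set xs"
  using assms
proof (induction L)
  case Nil
  have "is_derivation S []" by (simp add: is_derivation_def)
  then show ?case by auto
next
  case (Cons a L)
  then obtain xs where "is_derivation S xs" "set L \<subseteq> set xs" by auto
  moreover obtain ys where "is_derivation S ys" "a \<in> set ys"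
    using Cons.prems derivable_iff_in_derivation[of S a] by auto
  ultimately show ?case
    by (intro exI[of _ "xs @ ys"]) (auto intro: is_derivation_append)
qed

lemma derivable_hilbert_step:
  assumes "\<forall>x\<in>set prev. derivable S x" and "hilbert_step S prev \<psi>"
  shows "derivable S \<psi>"
proof -
  obtain xs where xs: "is_derivation S xs" "set prev \<subseteq> set xs"
    using derivation_containing assms(1) by blast
  then have "is_derivation S (xs @ [\<psi>])"
    using assms(2) hilbert_step_mono[OF xs(2)] by (simp add: is_derivation_snoc)
  then show ?thesis
    using derivable_iff_in_derivation[of S \<psi>] by auto
qed

lemma hilbert_step_subst:
  assumes "hilbert_step S prev \<psi>"
  shows "hilbert_step S (map (subst \<theta>) prev) (subst \<theta> \<psi>)"
proof -
  consider (axiom) a \<sigma> where "a \<in> fst S" "\<psi> = subst \<sigma> a"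
    | (rule) prems c \<sigma> where "(prems, c) \<in> snd S" "\<psi> = subst \<sigma> c"
        "\<forall>\<mu>\<in>set prems. subst \<sigma> \<mu> \<in> set prev"
    using assms unfolding hilbert_step_def by blast
  then show ?thesis
  proof cases
    case axiom
    then show ?thesis
      unfolding hilbert_step_def by (auto simp: subst_subst)
  next
    case rule
    then have "\<forall>\<mu>\<in>set prems. subst (\<lambda>v. subst \<theta> (\<sigma> v)) \<mu> \<in> set (map (subst \<theta>) prev)"
      by (auto simp: subst_subst[symmetric])
    with rule show ?thesis
      unfolding hilbert_step_def by (fastforce simp: subst_subst)
  qed
qed

lemma is_derivation_subst:
  "is_derivation S xs \<Longrightarrow> is_derivation S (map (subst \<theta>) xs)"
  unfolding is_derivation_def by (auto simp: take_map dest: hilbert_step_subst)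

lemma derivable_subst: "derivable S \<psi> \<Longrightarrow> derivable S (subst \<theta> \<psi>)"
  using is_derivation_subst derivable_iff_in_derivation by (metis image_eqI set_map)

lemma derivable_ext_pi2_step:
  assumes "is_derivation S xs" and "\<rho> \<in> \<Sigma>" and "pi2_step \<rho> xs \<psi>"
  shows "derivable_ext S \<Sigma> \<psi>"
  unfolding derivable_ext_def
proof (intro exI[of _ "xs @ [\<psi>]"] conjI)
  show "\<forall>i<length (xs @ [\<psi>]). hilbert_step S (take i (xs @ [\<psi>])) ((xs @ [\<psi>]) ! i)
      \<or> (\<exists>\<rho>\<in>\<Sigma>. pi2_step \<rho> (take i (xs @ [\<psi>])) ((xs @ [\<psi>]) ! i))"
    using assms unfolding is_derivation_def by (auto simp: nth_append less_Suc_eq)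
qed simp_all

lemma derivable_ext_imp_derivable:
  assumes preserved: "\<And>\<rho> prev \<psi>. \<rho> \<in> \<Sigma> \<Longrightarrow> pi2_step \<rho> prev \<psi> \<Longrightarrow>
      \<forall>x\<in>set prev. derivable S x \<Longrightarrow> derivable S \<psi>"
    and "derivable_ext S \<Sigma> \<psi>"
  shows "derivable S \<psi>"
proof -
  obtain xs where xs: "xs \<noteq> []" "last xs = \<psi>"
    and steps: "\<forall>i<length xs. hilbert_step S (take i xs) (xs ! i)
                  \<or> (\<exists>\<rho>\<in>\<Sigma>. pi2_step \<rho> (take i xs) (xs ! i))"
    using assms(2) unfolding derivable_ext_def by blast
  have "i < length xs \<Longrightarrow> derivable S (xs ! i)" for i
  proof (induction i rule: less_induct)
    case (less i)
    then have "\<forall>x\<in>set (take i xs). derivable S x"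
      by (auto simp: in_set_conv_nth)
    then show ?case
      using steps less.prems derivable_hilbert_step preserved by blast
  qed
  then show ?thesis
    using xs by (metis last_conv_nth length_greater_0_conv diff_less zero_less_one)
qed

lemma pi2_step_C_invariant:
  assumes "C_invariant (set ps) \<sigma>" and "set (map (subst \<sigma>) \<Gamma>) \<subseteq> set prev"
  shows "pi2_step (ps, \<Gamma>, \<phi>) prev (subst \<sigma> \<phi>)"
proof -
  have "(\<lambda>v. if v \<in> set ps then Var (id v) else \<sigma> v) = \<sigma>"
    using assms(1) unfolding C_invariant_def by auto
  then show ?thesis
    using assms unfolding pi2_step_def C_invariant_def
    by (intro case_prodI exI[of _ \<sigma>] exI[of _ id]) auto
qed

lemma fresh_injection:
  assumes "infinite (UNIV :: 'v set)" and "finite C" and "finite V"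
  obtains f :: "'v \<Rightarrow> 'v" where "inj_on f C" and "f ` C \<inter> V = {}"
proof -
  obtain D where D: "finite D" "card D = card C" "D \<subseteq> UNIV - V"
    using infinite_arbitrarily_large assms by (metis Diff_infinite_finite)
  then obtain f where "f ` C \<subseteq> D" "inj_on f C"
    using card_le_inj[OF assms(2) D(1)] by auto
  with D(3) show ?thesis using that by blast
qed

text \<open>
  \<theta> sends r(p) back to p and moves p to a fresh variable f(p); \<theta>' undoes the latter on V.
\<close>

lemma fold_back_renaming:
  fixes r :: "'v \<Rightarrow> 'v"
  assumes "infinite (UNIV :: 'v set)" and "finite C" and "finite V" and "inj_on r C"
  obtains \<theta> \<theta>' :: "'v \<Rightarrow> ('f, 'v) form"
  where "\<And>p. p \<in> C \<Longrightarrow> \<theta> (r p) = Var p"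
    and "\<And>w. w \<notin> r ` C \<Longrightarrow> vars (\<theta> w) \<inter> C = {}"
    and "\<And>w. w \<in> V \<Longrightarrow> w \<notin> r ` C \<Longrightarrow> subst \<theta>' (\<theta> w) = Var w"
proof -
  obtain f where f: "inj_on f C" "f ` C \<inter> (C \<union> V) = {}"
    using fresh_injection assms(1,2,3) by (metis finite_UnI)
  define \<theta> :: "'v \<Rightarrow> ('f, 'v) form" where "\<theta> w =
      (if w \<in> r ` C then Var (the_inv_into C r w) else if w \<in> C then Var (f w) else Var w)" for w
  define \<theta>' :: "'v \<Rightarrow> ('f, 'v) form" where "\<theta>' w =
      (if w \<in> f ` C then Var (the_inv_into C f w) else Var w)" for w
  show ?thesis
  proof
    show "\<theta> (r p) = Var p" if "p \<in> C" for p
      using that assms(4) by (simp add: \<theta>_def the_inv_into_f_f)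
    show "vars (\<theta> w) \<inter> C = {}" if "w \<notin> r ` C" for w
      using that f(2) by (auto simp: \<theta>_def)
    show "subst \<theta>' (\<theta> w) = Var w" if "w \<in> V" "w \<notin> r ` C" for w
      using that f by (auto simp: \<theta>_def \<theta>'_def the_inv_into_f_f)
  qed
qed

lemma derivable_pi2_step:
  assumes inf: "infinite (UNIV :: 'v set)" and rule: "pi2_rule (ps, \<Gamma>, \<phi>)"
    and criterion: "\<forall>\<sigma>. C_invariant (set ps) \<sigma> \<longrightarrow>
       (\<forall>\<mu>\<in>set \<Gamma>. derivable S (subst \<sigma> \<mu>)) \<longrightarrow> derivable S (subst \<sigma> \<phi>)"
    and step: "pi2_step (ps, \<Gamma>, \<phi>) prev \<psi>"
    and prev: "\<forall>x\<in>set prev. derivable S x"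
  shows "derivable S (\<psi> :: ('f, 'v) form)"
proof -
  define C where "C = set ps"
  define Rel where "Rel = (\<Union>\<mu>\<in>set \<Gamma>. vars \<mu>) \<union> vars \<phi>"
  have \<phi>_C: "vars \<phi> \<inter> C = {}"
    using rule unfolding pi2_rule_def C_def by simp
  obtain \<sigma> r where inj: "inj_on r C"
    and fresh: "\<forall>p\<in>C. \<forall>q\<in>Rel - C. r p \<notin> vars (\<sigma> q)"
    and \<psi>: "\<psi> = subst \<sigma> \<phi>"
    and prem: "\<forall>\<mu>\<in>set \<Gamma>. subst (\<lambda>v. if v \<in> C then Var (r v) else \<sigma> v) \<mu> \<in> set prev"
    using step unfolding pi2_step_def C_def Rel_def by auto
  have fresh': "w \<notin> r ` C" if "q \<in> Rel" "q \<notin> C" "w \<in> vars (\<sigma> q)" for q w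
    using fresh that by blast
  obtain \<theta> \<theta>' :: "'v \<Rightarrow> ('f, 'v) form"
    where \<theta>_r: "\<And>p. p \<in> C \<Longrightarrow> \<theta> (r p) = Var p"
      and \<theta>_C: "\<And>w. w \<notin> r ` C \<Longrightarrow> vars (\<theta> w) \<inter> C = {}"
      and \<theta>'_\<theta>: "\<And>w. w \<in> vars \<psi> \<Longrightarrow> w \<notin> r ` C \<Longrightarrow> subst \<theta>' (\<theta> w) = Var w"
    using fold_back_renaming[OF inf _ finite_vars inj] C_def by blast
  \<comment> \<open>outside Rel the step gives no freshness information, so \<sigma>' is trivial there\<close>
  define \<sigma>' where "\<sigma>' q = (if q \<in> C then Var q else if q \<in> Rel then subst \<theta> (\<sigma> q) else Var q)" for q
  have "C_invariant C \<sigma>'"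
    unfolding C_invariant_def \<sigma>'_def using \<theta>_C fresh' by (auto simp: vars_subst)
  moreover have "derivable S (subst \<sigma>' \<mu>)" if \<mu>: "\<mu> \<in> set \<Gamma>" for \<mu>
  proof -
    let ?\<tau> = "\<lambda>v. if v \<in> C then Var (r v) else \<sigma> v"
    have "subst \<sigma>' \<mu> = subst \<theta> (subst ?\<tau> \<mu>)"
      unfolding subst_subst using \<mu> \<theta>_r by (intro subst_cong) (auto simp: \<sigma>'_def Rel_def)
    then show ?thesis
      using prem prev \<mu> derivable_subst by metis
  qed
  ultimately have "derivable S (subst \<sigma>' \<phi>)"
    using criterion C_def by blast
  moreover have "subst \<sigma>' \<phi> = subst \<theta> \<psi>"
    unfolding \<psi> subst_subst using \<phi>_C by (intro subst_cong) (auto simp: \<sigma>'_def Rel_def)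
  moreover have "subst \<theta>' (subst \<theta> \<psi>) = \<psi>"
  proof -
    have "w \<notin> r ` C" if "w \<in> vars \<psi>" for w
      using that \<phi>_C fresh' by (auto simp: \<psi> vars_subst Rel_def)
    then have "subst \<theta>' (subst \<theta> \<psi>) = subst Var \<psi>"
      unfolding subst_subst using \<theta>'_\<theta> by (intro subst_cong) simp
    then show ?thesis by (simp add: subst_Var)
  qed
  ultimately show ?thesis
    using derivable_subst by metis
qed

theorem mainTheorem2:
  fixes S :: "('f, 'v) hilbert"
    and ps :: "'v list" and \<Gamma> :: "('f, 'v) form list" and \<phi> :: "('f, 'v) form"
  assumes "infinite (UNIV :: 'v set)"
    and "pi2_rule (ps, \<Gamma>, \<phi>)"
  shows "admissible S (ps, \<Gamma>, \<phi>) \<longleftrightarrow>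
    (\<forall>\<sigma>. C_invariant (set ps) \<sigma> \<longrightarrow>
       (\<forall>\<mu>\<in>set \<Gamma>. derivable S (subst \<sigma> \<mu>)) \<longrightarrow> derivable S (subst \<sigma> \<phi>))"
proof (intro iffI allI impI)
  fix \<sigma> assume adm: "admissible S (ps, \<Gamma>, \<phi>)" and inv: "C_invariant (set ps) \<sigma>"
    and "\<forall>\<mu>\<in>set \<Gamma>. derivable S (subst \<sigma> \<mu>)"
  then obtain xs where xs: "is_derivation S xs" "set (map (subst \<sigma>) \<Gamma>) \<subseteq> set xs"
    using derivation_containing[of "map (subst \<sigma>) \<Gamma>" S] by auto
  have "derivable_ext S {(ps, \<Gamma>, \<phi>)} (subst \<sigma> \<phi>)"
    using xs pi2_step_C_invariant[OF inv xs(2)] by (intro derivable_ext_pi2_step) auto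
  then show "derivable S (subst \<sigma> \<phi>)"
    using adm unfolding admissible_def by blast
next
  assume criterion: "\<forall>\<sigma>. C_invariant (set ps) \<sigma> \<longrightarrow>
       (\<forall>\<mu>\<in>set \<Gamma>. derivable S (subst \<sigma> \<mu>)) \<longrightarrow> derivable S (subst \<sigma> \<phi>)"
  show "admissible S (ps, \<Gamma>, \<phi>)"
    unfolding admissible_def
  proof (intro allI impI)
    fix \<psi> assume "derivable_ext S {(ps, \<Gamma>, \<phi>)} \<psi>"
    then show "derivable S \<psi>"
      by (rule derivable_ext_imp_derivable[rotated]) (auto intro: derivable_pi2_step[OF assms criterion])
  qed
qed

end
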